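(* Let $n>1$ be a natural number which is either multiplicatively $e$-perfect (i.e. $T_e(n)=n^2$) or multiplicatively $e$-superperfect (i.e. $T_e(T_e(n))=n^2$). Such an $n$ is a prime power; write $n=p^a$ with $p$ prime and $a\ge 1$. Then $n$ is $e$-harmonic of type $1$ if and only if $\frac{\sigma_e(n)}{p}$ divides $d_e(n)$.
   Context: For $n=p_1^{a_1}\cdots p_r^{a_r}>1$ (prime factorization), a divisor $d=p_1^{b_1}\cdots p_r^{b_r}$ of $n$ is an exponential divisor ($e$-divisor) if $b_i\mid a_i$ for all $i$ (in particular $b_i\ge 1$). $\sigma_e(n)$ is the sum of the $e$-divisors of $n$, $d_e(n)=d(a_1)\cdots d(a_r)$ is the number of $e$-divisors of $n$ (where $d(m)$ is the number of positive divisors of $m$), and $T_e(n)$ is the product of the $e$-divisors of $n$. An integer $n$ is called $e$-harmonic of type $1$ if $\sigma_e(n)\mid n\,d_e(n)$. It is known (Sándor) that $n>1$ is multiplicatively $e$-perfect iff $n=p^a$ with $p$ prime and $a$ an ordinary perfect number, and multiplicatively $e$-superperfect iff $n=p^a$ with $p$ prime and $\sigma(\sigma(a))=2a$. *)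

theory Defs
  imports "HOL-Computational_Algebra.Primes"
begin

text \<open>Exponential divisors: d = prod p_i^b_i divides n = prod p_i^a_i with b_i dvd a_i
  for every prime p_i of n (which forces b_i >= 1, since 0 dvd a_i only if a_i = 0).\<close>
definition e_divisors :: "nat \<Rightarrow> nat set" where
  "e_divisors n = {d. d dvd n \<and>
     (\<forall>p\<in>prime_factors n. multiplicity p d dvd multiplicity p n)}"

definition sigma_e :: "nat \<Rightarrow> nat" where
  "sigma_e n = (\<Sum>d\<in>e_divisors n. d)"

definition d_e :: "nat \<Rightarrow> nat" where
  "d_e n = (\<Prod>p\<in>prime_factors n. card {k. k dvd multiplicity p n})"

definition T_e :: "nat \<Rightarrow> nat" where
  "T_e n = (\<Prod>d\<in>e_divisors n. d)"

definition e_harmonic_type1 :: "nat \<Rightarrow> bool" where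
  "e_harmonic_type1 n \<longleftrightarrow> sigma_e n dvd n * d_e n"

end

theory Submission
  imports Defs
begin

text \<open>For \<open>n = p^a\<close> the e-divisors are the \<open>p^b\<close> with \<open>b dvd a\<close>. The divisor \<open>b = 1\<close>
  contributes \<open>p\<close> and every other one a multiple of \<open>p^2\<close>, so \<open>\<sigma>\<^sub>e(n) = p (1 + p t)\<close>.
  Thus \<open>\<sigma>\<^sub>e(n)/p\<close> is coprime to \<open>p\<close>, and the powers of \<open>p\<close> in
  \<open>n d\<^sub>e(n) = p^a d\<^sub>e(n)\<close> can be cancelled. The perfectness hypothesis only guarantees
  that \<open>n\<close> is a prime power, which is assumed anyway.\<close>

lemma e_divisors_prime_power:
  assumes p: "prime p" and a: "a \<ge> 1"
  shows "e_divisors (p ^ a) = (\<lambda>b. p ^ b) ` {b. b dvd a}"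
proof -
  have pf: "prime_factors (p ^ a) = {p}"
    using p a by (simp add: prime_factorization_prime_power)
  have mult: "multiplicity p (p ^ k) = k" for k
    using p by (simp add: multiplicity_prime_power)
  show ?thesis
  proof (rule set_eqI, rule iffI)
    fix d assume "d \<in> e_divisors (p ^ a)"
    then have "d dvd p ^ a" and md: "multiplicity p d dvd a"
      unfolding e_divisors_def using pf mult[of a] by auto
    then obtain k where "d = p ^ k" using divides_primepow_nat[OF p] by blast
    then show "d \<in> (\<lambda>b. p ^ b) ` {b. b dvd a}" using md mult by auto
  next
    fix d assume "d \<in> (\<lambda>b. p ^ b) ` {b. b dvd a}"
    then obtain k where k: "k dvd a" "d = p ^ k" by auto
    then have "d dvd p ^ a" using a by (simp add: dvd_imp_le le_imp_power_dvd)
    then show "d \<in> e_divisors (p ^ a)" unfolding e_divisors_def pf using mult k by auto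
  qed
qed

lemma sigma_e_prime_power:
  assumes "prime p" and "a \<ge> 1"
  shows "sigma_e (p ^ a) = (\<Sum>b | b dvd a. p ^ b)"
proof -
  have "inj_on (\<lambda>b. p ^ b) {b. b dvd a}"
    using prime_gt_1_nat[OF \<open>prime p\<close>] by (auto simp: inj_on_def power_inject_exp)
  then show ?thesis
    unfolding sigma_e_def e_divisors_prime_power[OF assms] by (simp add: sum.reindex)
qed

lemma sigma_e_prime_power_eq:
  assumes "prime p" and "a \<ge> 1"
  shows "sigma_e (p ^ a) = p * (1 + p * (\<Sum>b \<in> {b. b dvd a} - {1}. p ^ (b - 2)))"
proof -
  let ?D = "{b. b dvd a}"
  have fin: "finite ?D" using assms(2) by simp
  have "1 \<in> ?D" by simp
  have "sigma_e (p ^ a) = p + (\<Sum>b \<in> ?D - {1}. p ^ b)"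
    unfolding sigma_e_prime_power[OF assms]
    using sum.remove[OF fin \<open>1 \<in> ?D\<close>, of "\<lambda>b. p ^ b"] by simp
  also have "(\<Sum>b \<in> ?D - {1}. p ^ b) = (\<Sum>b \<in> ?D - {1}. p\<^sup>2 * p ^ (b - 2))"
  proof (rule sum.cong[OF refl])
    fix b assume "b \<in> ?D - {1}"
    \<comment> \<open>\<open>b \<noteq> 0\<close> because \<open>0 dvd a\<close> would force \<open>a = 0\<close>\<close>
    then have "b \<ge> 2" using assms(2) by (cases b) auto
    then show "p ^ b = p\<^sup>2 * p ^ (b - 2)" by (metis le_add_diff_inverse power_add)
  qed
  finally show ?thesis by (simp add: sum_distrib_left power2_eq_square algebra_simps)
qed

lemma coprime_one_plus_mult: "coprime (1 + p * t) (p :: nat)"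
  by (metis coprime_mult_right_iff coprime_add_one_left add.commute)

lemma mult_dvd_power_mult_iff_coprime:
  fixes p s m :: nat
  assumes "p > 0" and "a \<ge> 1" and "coprime s p"
  shows "p * s dvd p ^ a * m \<longleftrightarrow> s dvd m"
proof -
  have split: "p ^ a * m = p * (p ^ (a - 1) * m)"
    using \<open>a \<ge> 1\<close> by (cases a) auto
  have "p * s dvd p ^ a * m \<longleftrightarrow> s dvd p ^ (a - 1) * m"
    unfolding split using \<open>p > 0\<close> by simp
  also have "\<dots> \<longleftrightarrow> s dvd m"
    using \<open>coprime s p\<close> by (simp add: coprime_dvd_mult_right_iff coprime_power_right_iff)
  finally show ?thesis .
qed

theorem mainTheorem1:
  fixes n p a :: nat
  assumes "n > 1"
    and "T_e n = n ^ 2 \<or> T_e (T_e n) = n ^ 2"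
    and "prime p" and "a \<ge> 1" and "n = p ^ a"
  shows "e_harmonic_type1 n \<longleftrightarrow> (sigma_e n div p) dvd d_e n"
proof -
  define s where "s = 1 + p * (\<Sum>b \<in> {b. b dvd a} - {1}. p ^ (b - 2))"
  have p_pos: "p > 0" using \<open>prime p\<close> prime_gt_0_nat by blast
  have sigma: "sigma_e n = p * s"
    unfolding s_def \<open>n = p ^ a\<close> using sigma_e_prime_power_eq[OF \<open>prime p\<close> \<open>a \<ge> 1\<close>] .
  have "coprime s p" unfolding s_def by (rule coprime_one_plus_mult)
  then have "e_harmonic_type1 n \<longleftrightarrow> s dvd d_e n"
    unfolding e_harmonic_type1_def sigma unfolding \<open>n = p ^ a\<close>
    by (rule mult_dvd_power_mult_iff_coprime[OF p_pos \<open>a \<ge> 1\<close>])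
  also have "s = sigma_e n div p" using sigma p_pos by simp
  finally show ?thesis .
qed

end
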